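(* Let $n\ge1$ and $\widetilde Z(n;\mathbf x,\mathbf y)=\big[\prod_{i=1}^n x_i^{n-1}y_i^{n-1}\big]Z(n;\mathbf x,\mathbf y)$, which is a polynomial in the $x_i,y_i$. Then \[ \widetilde Z(n;\mathbf x,\mathbf y)=\Big[\prod_{i=1}^n x_i^{2(n-1)}\Big]C(n)+(\text{terms of lower total degree in }x_1,\dots,x_n),\qquad C(n)=\prod_{i=1}^n\sigma(a^{2i}). \]
   Context: Notation: $\bar z=z^{-1}$, $\sigma(z)=z-z^{-1}$; $a$ is a fixed nonzero parameter. Vertex weights: at a vertex where a horizontal and a vertical line cross, the four incident edges are oriented with exactly two pointing in. Type 1: horizontal edges in, vertical out; type 2: horizontal out, vertical in; type 3: horizontal right, vertical up; type 4: horizontal left, vertical down; type 5: horizontal left, vertical up; type 6: horizontal right, vertical down. A vertex with spectral parameter $z$ has weight $\sigma(a^2)$ (types 1,2), $\sigma(az)$ (types 3,4), $\sigma(a\bar z)$ (types 5,6). $Z(n;\mathbf x,\mathbf y)$, $\mathbf x=(x_1,\dots,x_n)$, $\mathbf y=(y_1,\dots,y_n)$, is the sum over all states (orientations of internal edges satisfying the two-in rule at every vertex) of the product of vertex weights, on the $n\times n$ grid of vertices $(i,j)$ (row $i$ from the top, column $j$ from the left), vertex $(i,j)$ having parameter $x_i\bar y_j$, with horizontal boundary edges pointing into the grid and vertical boundary edges pointing out of it (domain-wall boundary). *)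

theory Defs
  imports Complex_Main
begin

definition sig :: "complex \<Rightarrow> complex" where
  "sig z = z - inverse z"

(* Edge orientations around a vertex:
   L = left horizontal edge points right (i.e. into the vertex),
   R = right horizontal edge points right (i.e. out of the vertex),
   U = upper vertical edge points up (i.e. out of the vertex),
   D = lower vertical edge points up (i.e. into the vertex). *)
definition ice :: "bool \<Rightarrow> bool \<Rightarrow> bool \<Rightarrow> bool \<Rightarrow> bool" where
  "ice L R U D \<longleftrightarrow> of_bool L + of_bool (\<not> R) + of_bool (\<not> U) + of_bool D = (2::nat)"

definition vweight :: "complex \<Rightarrow> complex \<Rightarrow> bool \<Rightarrow> bool \<Rightarrow> bool \<Rightarrow> bool \<Rightarrow> complex" where
  "vweight a z L R U D =
     (if (L \<and> \<not> R \<and> U \<and> \<not> D) \<or> (\<not> L \<and> R \<and> \<not> U \<and> D) then sig (a\<^sup>2)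
      else if (L \<and> R \<and> U \<and> D) \<or> (\<not> L \<and> \<not> R \<and> \<not> U \<and> \<not> D) then sig (a * z)
      else if (\<not> L \<and> \<not> R \<and> U \<and> D) \<or> (L \<and> R \<and> \<not> U \<and> \<not> D) then sig (a * inverse z)
      else 0)"

(* States on the n x n grid, vertices (i,j), 0 <= i,j < n, row i from the top,
   column j from the left.
   h i j (i < n, j <= n): horizontal edge left of vertex (i,j); True = points right.
   v i j (i <= n, j < n): vertical edge above vertex (i,j); True = points up.
   Domain-wall boundary: horizontal boundary edges point in, vertical ones point out.
   Values outside the edge index range are fixed to False (normalisation). *)
definition dwbc_states :: "nat \<Rightarrow> ((nat \<Rightarrow> nat \<Rightarrow> bool) \<times> (nat \<Rightarrow> nat \<Rightarrow> bool)) set" where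
  "dwbc_states n = {(h, v).
      (\<forall>i<n. h i 0 \<and> \<not> h i n) \<and>
      (\<forall>j<n. v 0 j \<and> \<not> v n j) \<and>
      (\<forall>i j. \<not> (i < n \<and> j \<le> n) \<longrightarrow> \<not> h i j) \<and>
      (\<forall>i j. \<not> (i \<le> n \<and> j < n) \<longrightarrow> \<not> v i j) \<and>
      (\<forall>i<n. \<forall>j<n. ice (h i j) (h i (Suc j)) (v i j) (v (Suc i) j))}"

definition Zpf :: "nat \<Rightarrow> complex \<Rightarrow> (nat \<Rightarrow> complex) \<Rightarrow> (nat \<Rightarrow> complex) \<Rightarrow> complex" where
  "Zpf n a x y = (\<Sum>(h, v)\<in>dwbc_states n.
      \<Prod>i<n. \<Prod>j<n. vweight a (x i * inverse (y j)) (h i j) (h i (Suc j)) (v i j) (v (Suc i) j))"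

definition Ztilde :: "nat \<Rightarrow> complex \<Rightarrow> (nat \<Rightarrow> complex) \<Rightarrow> (nat \<Rightarrow> complex) \<Rightarrow> complex" where
  "Ztilde n a x y = (\<Prod>i<n. x i ^ (n - 1) * y i ^ (n - 1)) * Zpf n a x y"

definition Cn :: "nat \<Rightarrow> complex \<Rightarrow> complex" where
  "Cn n a = (\<Prod>i=1..n. sig (a ^ (2 * i)))"

end

theory Submission
  imports Defs "HOL-Library.FuncSet"
begin

(* Multiplied by its spectral parameter z = x_i / y_j, every vertex weight becomes a polynomial
   c_0 + c_1 z + c_2 z^2, where only c_1 survives at the vertices where the horizontal arrows turn
   (types 1, 2) and only c_0, c_2 survive elsewhere.  Expanding the product over the grid writes
   Ztilde as a sum, over states and exponent maps E, of monomials
   prod_i x_i^(R_i - 1) y_i^(2n - 1 - C_i) with R_i, C_j the row and column sums of E.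
   Every row and every column of a state contains a turn, so R_i, C_j <= 2n - 1: the x-degree is at
   most 2n(n - 1), with equality exactly when each row turns once and E is maximal at every vertex.
   Such states have y-degree 0; peeling off their top rows gives a recursion whose solution is
   sigma(a^2)^n a^(n(n-1)) [n]_q! with q = a^-4, and this product equals prod_i sigma(a^(2i)). *)

section \<open>Vertex weights and domain-wall states\<close>

lemma ice_iff: "ice L R U D \<longleftrightarrow> (L = R \<and> U = D) \<or> (L \<noteq> R \<and> U = L \<and> D = R)"
  unfolding ice_def by (cases L; cases R; cases U; cases D) auto

definition vweight_coeff :: "complex \<Rightarrow> bool \<Rightarrow> bool \<Rightarrow> bool \<Rightarrow> bool \<Rightarrow> nat \<Rightarrow> complex" where
  "vweight_coeff a L R U D e =
     (if (L \<and> \<not> R \<and> U \<and> \<not> D) \<or> (\<not> L \<and> R \<and> \<not> U \<and> D)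
        then (if e = 1 then sig (a\<^sup>2) else 0)
      else if (L \<and> R \<and> U \<and> D) \<or> (\<not> L \<and> \<not> R \<and> \<not> U \<and> \<not> D)
        then (if e = 2 then a else if e = 0 then - inverse a else 0)
      else if (\<not> L \<and> \<not> R \<and> U \<and> D) \<or> (L \<and> R \<and> \<not> U \<and> \<not> D)
        then (if e = 2 then - inverse a else if e = 0 then a else 0)
      else 0)"

lemma vweight_eq_coeff_sum:
  assumes "z \<noteq> 0"
  shows "vweight a z L R U D = (\<Sum>e<3. vweight_coeff a L R U D e * z ^ e) / z"
proof -
  have "(\<Sum>e<3. f e) = f 0 + f 1 + f 2" for f :: "nat \<Rightarrow> complex"
    by (simp add: eval_nat_numeral add.commute add.left_commute)
  then show ?thesis
    unfolding vweight_def vweight_coeff_def sig_def using assms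
    by (cases L; cases R; cases U; cases D) (auto simp: field_simps power2_eq_square)
qed

definition lead_degree :: "bool \<Rightarrow> bool \<Rightarrow> nat" where
  "lead_degree L R = (if L = R then 2 else 1)"

lemma vweight_coeff_nonzero:
  assumes "ice L R U D" "vweight_coeff a L R U D e \<noteq> 0"
  shows "e \<le> lead_degree L R" "L \<noteq> R \<Longrightarrow> e = 1"
  using assms unfolding ice_iff vweight_coeff_def lead_degree_def
  by (cases L; cases R; cases U; cases D; auto split: if_splits)+

lemma finite_bool_grids:
  assumes "finite K"
  shows "finite {h :: 'a \<Rightarrow> 'b \<Rightarrow> bool. \<forall>i j. h i j \<longrightarrow> (i, j) \<in> K}"
proof (rule finite_subset)
  show "{h. \<forall>i j. h i j \<longrightarrow> (i, j) \<in> K} \<subseteq> (\<lambda>A i j. (i, j) \<in> A) ` Pow K"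
  proof
    fix h :: "'a \<Rightarrow> 'b \<Rightarrow> bool"
    assume "h \<in> {h. \<forall>i j. h i j \<longrightarrow> (i, j) \<in> K}"
    then have "{(i, j). h i j} \<in> Pow K" by auto
    moreover have "h = (\<lambda>i j. (i, j) \<in> {(i, j). h i j})" by simp
    ultimately show "h \<in> (\<lambda>A i j. (i, j) \<in> A) ` Pow K" by blast
  qed
qed (use assms in simp)

lemma finite_edge_configurations:
  "finite {(h :: nat \<Rightarrow> nat \<Rightarrow> bool, v :: nat \<Rightarrow> nat \<Rightarrow> bool).
     (\<forall>i j. h i j \<longrightarrow> i < r \<and> j \<le> n) \<and> (\<forall>i j. v i j \<longrightarrow> i \<le> r \<and> j < n)}"
proof -
  have "finite ({h. \<forall>i j. h i j \<longrightarrow> (i, j) \<in> {..<r} \<times> {..n}}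
             \<times> {v. \<forall>i j. v i j \<longrightarrow> (i, j) \<in> {..r} \<times> {..<n}})"
    by (intro finite_cartesian_product finite_bool_grids) auto
  then show ?thesis by (rule finite_subset[rotated]) auto
qed

lemma finite_dwbc_states: "finite (dwbc_states n)"
  by (rule finite_subset[OF _ finite_edge_configurations[of n n]]) (auto simp: dwbc_states_def)

lemma eq_if_no_step_change:
  assumes "l \<le> k" "\<And>j. l \<le> j \<Longrightarrow> j < k \<Longrightarrow> f (Suc j) = f j"
  shows "f k = f l"
  using assms
proof (induction k rule: dec_induct)
  case (step k)
  then show ?case by simp
qed simp

lemma exists_step_change:
  assumes "f 0 \<noteq> f n"
  shows "\<exists>j<n. f j \<noteq> f (Suc j)"
  using eq_if_no_step_change[of 0 n f] assms by (metis le0)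

lemma step_function_of_single_change:
  assumes "f 0" "\<not> f n" "\<And>j. j < n \<Longrightarrow> f j \<noteq> f (Suc j) \<longleftrightarrow> j = p" "j \<le> n"
  shows "f j = (j \<le> p)"
proof (cases "j \<le> p")
  case True
  have "f j = f 0"
  proof (rule eq_if_no_step_change)
    fix i assume "i < j"
    then show "f (Suc i) = f i" using assms(3)[of i] assms(4) True by auto
  qed simp
  then show ?thesis using True assms(1) by simp
next
  case False
  have "f j = f (Suc p)"
  proof (rule eq_if_no_step_change)
    fix i assume "Suc p \<le> i" "i < j"
    then show "f (Suc i) = f i" using assms(3)[of i] assms(4) by auto
  qed (use False in simp)
  moreover have "f n = f (Suc p)"
  proof (rule eq_if_no_step_change)
    fix i assume "Suc p \<le> i" "i < n"
    then show "f (Suc i) = f i" using assms(3)[of i] by auto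
  qed (use False assms(4) in simp)
  ultimately show ?thesis using False assms(2) by simp
qed

lemma dwbc_ice:
  "(h, v) \<in> dwbc_states n \<Longrightarrow> i < n \<Longrightarrow> j < n \<Longrightarrow> ice (h i j) (h i (Suc j)) (v i j) (v (Suc i) j)"
  unfolding dwbc_states_def by blast

lemma dwbc_row_turn:
  assumes "(h, v) \<in> dwbc_states n" "i < n"
  obtains j where "j < n" "h i j \<noteq> h i (Suc j)"
  using exists_step_change[of "h i" n] assms by (auto simp: dwbc_states_def)

lemma dwbc_column_turn:
  assumes s: "(h, v) \<in> dwbc_states n" and j: "j < n"
  obtains i where "i < n" "h i j \<noteq> h i (Suc j)"
proof -
  have "v 0 j \<noteq> v n j" using s j by (auto simp: dwbc_states_def)
  then obtain i where i: "i < n" "v i j \<noteq> v (Suc i) j"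
    using exists_step_change[of "\<lambda>i. v i j"] by blast
  then show ?thesis using that dwbc_ice[OF s i(1) j] by (auto simp: ice_iff)
qed

section \<open>Expansion of Ztilde into monomials\<close>

definition grid :: "nat \<Rightarrow> (nat \<times> nat) set" where
  "grid n = {..<n} \<times> {..<n}"

definition exponent_maps :: "nat \<Rightarrow> (nat \<times> nat \<Rightarrow> nat) set" where
  "exponent_maps n = grid n \<rightarrow>\<^sub>E {..<3}"

definition state_coeff ::
    "complex \<Rightarrow> nat \<Rightarrow> (nat \<Rightarrow> nat \<Rightarrow> bool) \<Rightarrow> (nat \<Rightarrow> nat \<Rightarrow> bool) \<Rightarrow> (nat \<times> nat \<Rightarrow> nat) \<Rightarrow> complex" where
  "state_coeff a n h v E =
     (\<Prod>(i, j)\<in>grid n. vweight_coeff a (h i j) (h i (Suc j)) (v i j) (v (Suc i) j) (E (i, j)))"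

definition row_sum :: "nat \<Rightarrow> (nat \<times> nat \<Rightarrow> nat) \<Rightarrow> nat \<Rightarrow> nat" where
  "row_sum n E i = (\<Sum>j<n. E (i, j))"

definition col_sum :: "nat \<Rightarrow> (nat \<times> nat \<Rightarrow> nat) \<Rightarrow> nat \<Rightarrow> nat" where
  "col_sum n E j = (\<Sum>i<n. E (i, j))"

text \<open>The subtractions are truncated; they are exact whenever the state coefficient is nonzero
  (lemmas \<open>row_sum_ge_1\<close> and \<open>col_sum_less\<close>).\<close>
definition monomial_exponent :: "nat \<Rightarrow> (nat \<times> nat \<Rightarrow> nat) \<Rightarrow> (nat \<Rightarrow> nat) \<times> (nat \<Rightarrow> nat)" where
  "monomial_exponent n E =
     (\<lambda>i. if i < n then row_sum n E i - 1 else 0, \<lambda>j. if j < n then 2 * n - 1 - col_sum n E j else 0)"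

definition monomial ::
    "nat \<Rightarrow> (nat \<Rightarrow> complex) \<Rightarrow> (nat \<Rightarrow> complex) \<Rightarrow> (nat \<Rightarrow> nat) \<times> (nat \<Rightarrow> nat) \<Rightarrow> complex" where
  "monomial n x y m = (\<Prod>i<n. x i ^ fst m i * y i ^ snd m i)"

definition Ztilde_coeff :: "complex \<Rightarrow> nat \<Rightarrow> (nat \<Rightarrow> nat) \<times> (nat \<Rightarrow> nat) \<Rightarrow> complex" where
  "Ztilde_coeff a n m =
     (\<Sum>(h, v)\<in>dwbc_states n.
        \<Sum>E\<in>{E\<in>exponent_maps n. monomial_exponent n E = m}. state_coeff a n h v E)"

lemma finite_exponent_maps: "finite (exponent_maps n)"
  unfolding exponent_maps_def grid_def by (intro finite_PiE) auto

lemma prod_grid: "(\<Prod>(i, j)\<in>grid n. g i j) = (\<Prod>i<n. \<Prod>j<n. g i j)"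
  unfolding grid_def by (rule prod.cartesian_product[symmetric])

lemma state_coeff_nonzero:
  assumes s: "(h, v) \<in> dwbc_states n" and c: "state_coeff a n h v E \<noteq> 0" and ij: "i < n" "j < n"
  shows "E (i, j) \<le> lead_degree (h i j) (h i (Suc j))"
    and "h i j \<noteq> h i (Suc j) \<Longrightarrow> E (i, j) = 1"
proof -
  have "vweight_coeff a (h i j) (h i (Suc j)) (v i j) (v (Suc i) j) (E (i, j)) \<noteq> 0"
    using c ij unfolding state_coeff_def prod_grid by auto
  from vweight_coeff_nonzero[OF dwbc_ice[OF s ij] this]
  show "E (i, j) \<le> lead_degree (h i j) (h i (Suc j))" "h i j \<noteq> h i (Suc j) \<Longrightarrow> E (i, j) = 1"
    by auto
qed

lemma sum_lead_degree:
  assumes "finite A"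
  shows "(\<Sum>j\<in>A. lead_degree (f j) (g j)) + card {j\<in>A. f j \<noteq> g j} = 2 * card A"
proof -
  have "card {j\<in>A. f j \<noteq> g j} = (\<Sum>j\<in>A. of_bool (f j \<noteq> g j))"
    using assms by (simp add: Int_def)
  then have "(\<Sum>j\<in>A. lead_degree (f j) (g j)) + card {j\<in>A. f j \<noteq> g j}
      = (\<Sum>j\<in>A. lead_degree (f j) (g j) + of_bool (f j \<noteq> g j))"
    by (simp add: sum.distrib)
  also have "\<dots> = (\<Sum>j\<in>A. 2)" by (rule sum.cong) (auto simp: lead_degree_def)
  finally show ?thesis by simp
qed

lemma row_sum_ge_1:
  assumes s: "(h, v) \<in> dwbc_states n" and c: "state_coeff a n h v E \<noteq> 0" and i: "i < n"
  shows "1 \<le> row_sum n E i"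
proof -
  obtain j where j: "j < n" "h i j \<noteq> h i (Suc j)" using dwbc_row_turn[OF s i] .
  then have "E (i, j) = 1" using state_coeff_nonzero(2)[OF s c i] by blast
  then show ?thesis using member_le_sum[of j "{..<n}" "\<lambda>j. E (i, j)"] j by (simp add: row_sum_def)
qed

lemma row_sum_le_lead:
  assumes s: "(h, v) \<in> dwbc_states n" and c: "state_coeff a n h v E \<noteq> 0" and i: "i < n"
  shows "row_sum n E i \<le> (\<Sum>j<n. lead_degree (h i j) (h i (Suc j)))"
  unfolding row_sum_def by (rule sum_mono) (use state_coeff_nonzero(1)[OF s c i] in auto)

lemma row_sum_less:
  assumes s: "(h, v) \<in> dwbc_states n" and c: "state_coeff a n h v E \<noteq> 0" and i: "i < n"
  shows "row_sum n E i < 2 * n"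
proof -
  obtain j where "j < n" "h i j \<noteq> h i (Suc j)" using dwbc_row_turn[OF s i] .
  then have "0 < card {j\<in>{..<n}. h i j \<noteq> h i (Suc j)}" by (auto simp: card_gt_0_iff)
  then show ?thesis
    using row_sum_le_lead[OF s c i] sum_lead_degree[of "{..<n}" "h i" "\<lambda>j. h i (Suc j)"] by simp
qed

lemma col_sum_less:
  assumes s: "(h, v) \<in> dwbc_states n" and c: "state_coeff a n h v E \<noteq> 0" and j: "j < n"
  shows "col_sum n E j < 2 * n"
proof -
  obtain i where "i < n" "h i j \<noteq> h i (Suc j)" using dwbc_column_turn[OF s j] .
  then have "0 < card {i\<in>{..<n}. h i j \<noteq> h i (Suc j)}" by (auto simp: card_gt_0_iff)
  moreover have "col_sum n E j \<le> (\<Sum>i<n. lead_degree (h i j) (h i (Suc j)))"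
    unfolding col_sum_def by (rule sum_mono) (use state_coeff_nonzero(1)[OF s c _ j] in auto)
  ultimately show ?thesis
    using sum_lead_degree[of "{..<n}" "\<lambda>i. h i j" "\<lambda>i. h i (Suc j)"] by simp
qed

lemma prod_grid_power:
  fixes x y :: "nat \<Rightarrow> 'a::field"
  shows "(\<Prod>(i, j)\<in>grid n. (x i / y j) ^ E (i, j))
       = (\<Prod>i<n. x i ^ row_sum n E i) / (\<Prod>j<n. y j ^ col_sum n E j)"
proof -
  have "(\<Prod>(i, j)\<in>grid n. (x i / y j) ^ E (i, j))
      = (\<Prod>i<n. \<Prod>j<n. x i ^ E (i, j)) / (\<Prod>i<n. \<Prod>j<n. y j ^ E (i, j))"
    by (simp add: prod_grid power_divide prod_dividef)
  also have "(\<Prod>i<n. \<Prod>j<n. y j ^ E (i, j)) = (\<Prod>j<n. \<Prod>i<n. y j ^ E (i, j))"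
    by (rule prod.swap)
  finally show ?thesis by (simp add: row_sum_def col_sum_def power_sum)
qed

lemma grid_monomial_normalize:
  fixes x y :: "nat \<Rightarrow> complex"
  assumes nz: "\<forall>i<n. x i \<noteq> 0 \<and> y i \<noteq> 0"
    and R: "\<forall>i<n. 1 \<le> row_sum n E i" and C: "\<forall>j<n. col_sum n E j < 2 * n"
  shows "(\<Prod>i<n. x i ^ (n - 1) * y i ^ (n - 1)) * (\<Prod>(i, j)\<in>grid n. (x i / y j) ^ E (i, j))
       = monomial n x y (monomial_exponent n E) * (\<Prod>(i, j)\<in>grid n. x i / y j)"
proof -
  have cross: "X1 * Y1 * (XR / YC) = XR1 * Y2 * (Xn / Yn)"
    if "X1 * XR = XR1 * Xn" "Y1 * Yn = Y2 * YC" "YC \<noteq> 0" "Yn \<noteq> 0"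
    for X1 XR XR1 Xn Y1 Yn Y2 YC :: complex
    using that by (simp add: field_simps)
  have factor: "x i ^ (n - 1) * y i ^ (n - 1) * (x i ^ row_sum n E i / y i ^ col_sum n E i)
      = x i ^ (row_sum n E i - 1) * y i ^ (2 * n - 1 - col_sum n E i) * (x i ^ n / y i ^ n)"
    if i: "i < n" for i
  proof (rule cross)
    show "x i ^ (n - 1) * x i ^ row_sum n E i = x i ^ (row_sum n E i - 1) * x i ^ n"
      using R i by (simp add: power_add[symmetric] add.commute)
    have "n - 1 + n = 2 * n - 1 - col_sum n E i + col_sum n E i" using C i by fastforce
    then show "y i ^ (n - 1) * y i ^ n = y i ^ (2 * n - 1 - col_sum n E i) * y i ^ col_sum n E i"
      by (simp only: power_add[symmetric])
  qed (use nz i in simp_all)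
  have "(\<Prod>(i, j)\<in>grid n. x i / y j) = (\<Prod>i<n. x i ^ n) / (\<Prod>j<n. y j ^ n)"
    using prod_grid_power[where E = "\<lambda>_. 1"] by (simp add: row_sum_def col_sum_def)
  then show ?thesis
    using prod.cong[OF refl factor, of "{..<n}"]
    by (simp add: prod_grid_power monomial_def monomial_exponent_def prod.distrib prod_dividef)
qed

lemma dwbc_state_expansion:
  fixes x y :: "nat \<Rightarrow> complex"
  assumes s: "(h, v) \<in> dwbc_states n" and nz: "\<forall>i<n. x i \<noteq> 0 \<and> y i \<noteq> 0"
  shows "(\<Prod>i<n. x i ^ (n - 1) * y i ^ (n - 1)) *
           (\<Prod>i<n. \<Prod>j<n. vweight a (x i * inverse (y j)) (h i j) (h i (Suc j)) (v i j) (v (Suc i) j))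
       = (\<Sum>E\<in>exponent_maps n. state_coeff a n h v E * monomial n x y (monomial_exponent n E))"
proof -
  let ?P = "\<Prod>i<n. x i ^ (n - 1) * y i ^ (n - 1)"
  define z where "z k = x (fst k) / y (snd k)" for k
  define c where "c k = vweight_coeff a (h (fst k) (snd k)) (h (fst k) (Suc (snd k)))
                          (v (fst k) (snd k)) (v (Suc (fst k)) (snd k))" for k
  have "(\<Prod>i<n. \<Prod>j<n. vweight a (x i * inverse (y j)) (h i j) (h i (Suc j)) (v i j) (v (Suc i) j))
      = (\<Prod>k\<in>grid n. (\<Sum>e<3. c k e * z k ^ e) / z k)"
    unfolding prod_grid[symmetric] case_prod_unfold
    by (intro prod.cong refl)
      (use nz in \<open>auto simp: grid_def z_def c_def vweight_eq_coeff_sum divide_inverse\<close>)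
  also have "\<dots> = (\<Prod>k\<in>grid n. \<Sum>e<3. c k e * z k ^ e) / (\<Prod>k\<in>grid n. z k)"
    by (rule prod_dividef)
  also have "\<dots> = (\<Sum>E\<in>exponent_maps n. \<Prod>k\<in>grid n. c k (E k) * z k ^ E k) / (\<Prod>k\<in>grid n. z k)"
    unfolding exponent_maps_def by (subst prod_sum_PiE) (auto simp: grid_def)
  also have "\<dots> = (\<Sum>E\<in>exponent_maps n.
      state_coeff a n h v E * ((\<Prod>k\<in>grid n. z k ^ E k) / (\<Prod>k\<in>grid n. z k)))"
    by (simp add: state_coeff_def case_prod_unfold c_def prod.distrib sum_divide_distrib)
  finally have expand:
    "?P * (\<Prod>i<n. \<Prod>j<n. vweight a (x i * inverse (y j)) (h i j) (h i (Suc j)) (v i j) (v (Suc i) j))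
      = (\<Sum>E\<in>exponent_maps n.
           state_coeff a n h v E * (?P * (\<Prod>k\<in>grid n. z k ^ E k) / (\<Prod>k\<in>grid n. z k)))"
    by (simp add: sum_distrib_left mult_ac)
  have "(\<Prod>k\<in>grid n. z k) \<noteq> 0"
    using nz by (auto simp: z_def grid_def)
  then have "state_coeff a n h v E * (?P * (\<Prod>k\<in>grid n. z k ^ E k) / (\<Prod>k\<in>grid n. z k))
      = state_coeff a n h v E * monomial n x y (monomial_exponent n E)" for E
    using grid_monomial_normalize[OF nz, of E] row_sum_ge_1[OF s] col_sum_less[OF s]
    by (cases "state_coeff a n h v E = 0") (auto simp: z_def case_prod_unfold)
  then show ?thesis unfolding expand by simp
qed

lemma sum_sum_group_by:
  fixes f :: "'a \<Rightarrow> 'b \<Rightarrow> 'c::semiring_0"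
  assumes "finite A" "finite B"
  shows "(\<Sum>a\<in>A. \<Sum>b\<in>B. f a b * g (k b)) = (\<Sum>m\<in>k ` B. (\<Sum>a\<in>A. \<Sum>b\<in>{b\<in>B. k b = m}. f a b) * g m)"
proof -
  have "(\<Sum>m\<in>k ` B. (\<Sum>a\<in>A. \<Sum>b\<in>{b\<in>B. k b = m}. f a b) * g m)
      = (\<Sum>m\<in>k ` B. \<Sum>a\<in>A. \<Sum>b\<in>{b\<in>B. k b = m}. f a b * g m)"
    by (simp add: sum_distrib_right)
  also have "\<dots> = (\<Sum>a\<in>A. \<Sum>m\<in>k ` B. \<Sum>b\<in>{b\<in>B. k b = m}. f a b * g m)"
    by (rule sum.swap)
  also have "\<dots> = (\<Sum>a\<in>A. \<Sum>m\<in>k ` B. \<Sum>b\<in>{b\<in>B. k b = m}. f a b * g (k b))"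
    by (intro sum.cong refl) auto
  also have "\<dots> = (\<Sum>a\<in>A. \<Sum>b\<in>B. f a b * g (k b))"
    by (intro sum.cong refl sum.group) (use assms in auto)
  finally show ?thesis ..
qed

lemma Ztilde_coeff_nonzero:
  assumes "Ztilde_coeff a n m \<noteq> 0"
  obtains h v E where "(h, v) \<in> dwbc_states n" "E \<in> exponent_maps n"
    "monomial_exponent n E = m" "state_coeff a n h v E \<noteq> 0"
  using assms unfolding Ztilde_coeff_def
  by (metis (mono_tags, lifting) case_prod_conv mem_Collect_eq prod.collapse sum.neutral)

lemma Ztilde_coeff_support: "{m. Ztilde_coeff a n m \<noteq> 0} \<subseteq> monomial_exponent n ` exponent_maps n"
  by (blast elim: Ztilde_coeff_nonzero)

lemma finite_Ztilde_coeff_support: "finite {m. Ztilde_coeff a n m \<noteq> 0}"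
  using finite_exponent_maps Ztilde_coeff_support by (rule finite_surj)

lemma Ztilde_expansion:
  fixes x y :: "nat \<Rightarrow> complex"
  assumes nz: "\<forall>i<n. x i \<noteq> 0 \<and> y i \<noteq> 0"
  shows "Ztilde n a x y = (\<Sum>m\<in>{m. Ztilde_coeff a n m \<noteq> 0}. Ztilde_coeff a n m * monomial n x y m)"
proof -
  have "Ztilde n a x y
      = (\<Sum>(h, v)\<in>dwbc_states n. \<Sum>E\<in>exponent_maps n.
           state_coeff a n h v E * monomial n x y (monomial_exponent n E))"
    unfolding Ztilde_def Zpf_def sum_distrib_left
    by (intro sum.cong refl) (auto simp: dwbc_state_expansion[OF _ nz, simplified])
  also have "\<dots> = (\<Sum>m\<in>monomial_exponent n ` exponent_maps n. Ztilde_coeff a n m * monomial n x y m)"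
    unfolding Ztilde_coeff_def case_prod_unfold
    by (rule sum_sum_group_by[OF finite_dwbc_states finite_exponent_maps])
  also have "\<dots> = (\<Sum>m\<in>{m. Ztilde_coeff a n m \<noteq> 0}. Ztilde_coeff a n m * monomial n x y m)"
    using Ztilde_coeff_support by (intro sum.mono_neutral_right) (auto simp: finite_exponent_maps)
  finally show ?thesis .
qed

section \<open>The degree bound\<close>

definition top_exponent :: "nat \<Rightarrow> (nat \<Rightarrow> nat) \<times> (nat \<Rightarrow> nat)" where
  "top_exponent n = (\<lambda>i. if i < n then 2 * (n - 1) else 0, \<lambda>_. 0)"

definition lead_exponents :: "nat \<Rightarrow> (nat \<Rightarrow> nat \<Rightarrow> bool) \<Rightarrow> nat \<times> nat \<Rightarrow> nat" where
  "lead_exponents n h = (\<lambda>(i, j)\<in>grid n. lead_degree (h i j) (h i (Suc j)))"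

definition one_turn_states :: "nat \<Rightarrow> ((nat \<Rightarrow> nat \<Rightarrow> bool) \<times> (nat \<Rightarrow> nat \<Rightarrow> bool)) set" where
  "one_turn_states n = {(h, v)\<in>dwbc_states n. \<forall>i<n. \<exists>p<n. \<forall>j\<le>n. h i j = (j \<le> p)}"

lemma row_sum_maximal:
  assumes s: "(h, v) \<in> dwbc_states n" and c: "state_coeff a n h v E \<noteq> 0" and i: "i < n"
    and R: "2 * n - 1 \<le> row_sum n E i"
  shows "\<forall>j<n. E (i, j) = lead_degree (h i j) (h i (Suc j))"
    and "\<exists>p<n. \<forall>j\<le>n. h i j = (j \<le> p)"
proof -
  let ?T = "{j\<in>{..<n}. h i j \<noteq> h i (Suc j)}"
  obtain j0 where "j0 < n" "h i j0 \<noteq> h i (Suc j0)" using dwbc_row_turn[OF s i] .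
  then have "0 < card ?T" by (auto simp: card_gt_0_iff)
  moreover have "row_sum n E i \<le> (\<Sum>j<n. lead_degree (h i j) (h i (Suc j)))"
    by (rule row_sum_le_lead[OF s c i])
  moreover note sum_lead_degree[of "{..<n}" "h i" "\<lambda>j. h i (Suc j)"]
  ultimately have T: "card ?T = 1"
    and eq: "(\<Sum>j<n. E (i, j)) = (\<Sum>j<n. lead_degree (h i j) (h i (Suc j)))"
    using R by (auto simp: row_sum_def)
  show "\<forall>j<n. E (i, j) = lead_degree (h i j) (h i (Suc j))"
    using sum_mono_inv[OF eq] state_coeff_nonzero(1)[OF s c i] by blast
  obtain p where p: "?T = {p}" using T by (rule card_1_singletonE)
  have "h i j = (j \<le> p)" if "j \<le> n" for j
  proof (rule step_function_of_single_change[of "h i" n])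
    show "h i 0" "\<not> h i n" using s i by (auto simp: dwbc_states_def)
  qed (use p that in blast)+
  moreover have "p < n" using p by blast
  ultimately show "\<exists>p<n. \<forall>j\<le>n. h i j = (j \<le> p)" by blast
qed

lemma top_exponent_fiber:
  assumes s: "(h, v) \<in> dwbc_states n" and E: "E \<in> exponent_maps n" and c: "state_coeff a n h v E \<noteq> 0"
    and top: "2 * n * (n - 1) \<le> (\<Sum>i<n. fst (monomial_exponent n E) i)"
  shows "(h, v) \<in> one_turn_states n" "E = lead_exponents n h"
proof -
  have le: "fst (monomial_exponent n E) i \<le> 2 * (n - 1)" if "i < n" for i
    using row_sum_less[OF s c that] that by (simp add: monomial_exponent_def)
  have "(\<Sum>i<n. fst (monomial_exponent n E) i) \<le> (\<Sum>i<n. 2 * (n - 1))"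
    by (rule sum_mono) (use le in blast)
  then have "(\<Sum>i<n. fst (monomial_exponent n E) i) = (\<Sum>i<n. 2 * (n - 1))"
    using top by (simp add: mult_ac)
  then have fst_eq: "fst (monomial_exponent n E) i = 2 * (n - 1)" if "i < n" for i
    using sum_mono_inv[of _ "{..<n}"] le that by blast
  have R: "2 * n - 1 \<le> row_sum n E i" if i: "i < n" for i
  proof -
    have "row_sum n E i - 1 = 2 * (n - 1)"
      using fst_eq[OF i] i by (simp add: monomial_exponent_def)
    then show ?thesis using row_sum_ge_1[OF s c i] by arith
  qed
  show "(h, v) \<in> one_turn_states n"
    using s row_sum_maximal(2)[OF s c _ R] by (simp add: one_turn_states_def)
  have "E = restrict E (grid n)"
    using E by (simp add: exponent_maps_def PiE_def extensional_restrict)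
  also have "\<dots> = lead_exponents n h"
    unfolding lead_exponents_def
    by (rule restrict_ext) (use row_sum_maximal(1)[OF s c _ R] in \<open>auto simp: grid_def\<close>)
  finally show "E = lead_exponents n h" .
qed

lemma one_turn_row_turns:
  assumes "(h, v) \<in> one_turn_states n" "i < n"
  shows "card {j\<in>{..<n}. h i j \<noteq> h i (Suc j)} = 1"
proof -
  obtain p where "p < n" "\<forall>j\<le>n. h i j = (j \<le> p)"
    using assms by (auto simp: one_turn_states_def)
  then have "{j\<in>{..<n}. h i j \<noteq> h i (Suc j)} = {p}" by auto
  then show ?thesis by simp
qed

lemma one_turn_column_turns:
  assumes s: "(h, v) \<in> one_turn_states n" and j: "j < n"
  shows "card {i\<in>{..<n}. h i j \<noteq> h i (Suc j)} = 1"
proof -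
  have dw: "(h, v) \<in> dwbc_states n" using s by (simp add: one_turn_states_def)
  let ?c = "\<lambda>j. card {i\<in>{..<n}. h i j \<noteq> h i (Suc j)}"
  have ge: "1 \<le> ?c j" if jn: "j < n" for j
  proof -
    obtain i where "i < n" "h i j \<noteq> h i (Suc j)" using dwbc_column_turn[OF dw jn] .
    then show ?thesis by (auto simp: Suc_le_eq card_gt_0_iff)
  qed
  have "(\<Sum>j<n. ?c j) = (\<Sum>j<n. \<Sum>i<n. of_bool (h i j \<noteq> h i (Suc j)))"
    by (simp add: Int_def)
  also have "\<dots> = (\<Sum>i<n. \<Sum>j<n. of_bool (h i j \<noteq> h i (Suc j)))"
    by (rule sum.swap)
  also have "\<dots> = (\<Sum>i<n. 1)"
    using one_turn_row_turns[OF s] by (simp add: Int_def)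
  finally show ?thesis
    using sum_mono_inv[of "\<lambda>_. 1" "{..<n}" ?c j] ge j by simp
qed

lemma monomial_exponent_lead_exponents:
  assumes s: "(h, v) \<in> one_turn_states n"
  shows "monomial_exponent n (lead_exponents n h) = top_exponent n"
proof -
  have R: "row_sum n (lead_exponents n h) i = 2 * n - 1" if "i < n" for i
    using sum_lead_degree[of "{..<n}" "h i" "\<lambda>j. h i (Suc j)"] one_turn_row_turns[OF s that] that
    by (simp add: row_sum_def lead_exponents_def grid_def)
  have C: "col_sum n (lead_exponents n h) j = 2 * n - 1" if "j < n" for j
    using sum_lead_degree[of "{..<n}" "\<lambda>i. h i j" "\<lambda>i. h i (Suc j)"]
      one_turn_column_turns[OF s that] that
    by (simp add: col_sum_def lead_exponents_def grid_def)
  show ?thesis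
    using R C by (auto simp: monomial_exponent_def top_exponent_def fun_eq_iff)
qed

lemma Ztilde_coeff_degree:
  assumes "Ztilde_coeff a n m \<noteq> 0" "m \<noteq> top_exponent n"
  shows "(\<Sum>i<n. fst m i) < 2 * n * (n - 1)"
proof (rule ccontr)
  assume top: "\<not> ?thesis"
  obtain h v E where s: "(h, v) \<in> dwbc_states n" and E: "E \<in> exponent_maps n"
    and m: "monomial_exponent n E = m" and c: "state_coeff a n h v E \<noteq> 0"
    using assms(1) by (rule Ztilde_coeff_nonzero)
  have "(h, v) \<in> one_turn_states n" "E = lead_exponents n h"
    using top_exponent_fiber[OF s E c] top m by auto
  then have "m = top_exponent n"
    using m monomial_exponent_lead_exponents by blast
  with assms(2) show False ..
qed

section \<open>The top coefficient\<close>

definition vweight_lead :: "complex \<Rightarrow> bool \<Rightarrow> bool \<Rightarrow> bool \<Rightarrow> bool \<Rightarrow> complex" where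
  "vweight_lead a L R U D = vweight_coeff a L R U D (lead_degree L R)"

definition lead_weight ::
    "complex \<Rightarrow> nat \<Rightarrow> nat \<Rightarrow> (nat \<Rightarrow> nat \<Rightarrow> bool) \<Rightarrow> (nat \<Rightarrow> nat \<Rightarrow> bool) \<Rightarrow> complex" where
  "lead_weight a n r h v = (\<Prod>i<r. \<Prod>j<n. vweight_lead a (h i j) (h i (Suc j)) (v i j) (v (Suc i) j))"

lemma lead_exponents_in_exponent_maps: "lead_exponents n h \<in> exponent_maps n"
  by (auto simp: lead_exponents_def exponent_maps_def lead_degree_def)

lemma state_coeff_lead_exponents: "state_coeff a n h v (lead_exponents n h) = lead_weight a n n h v"
  unfolding state_coeff_def prod_grid lead_weight_def
  by (intro prod.cong refl) (auto simp: lead_exponents_def grid_def vweight_lead_def)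

lemma Ztilde_coeff_top_exponent:
  "Ztilde_coeff a n (top_exponent n) = (\<Sum>(h, v)\<in>one_turn_states n. lead_weight a n n h v)"
proof -
  let ?F = "{E\<in>exponent_maps n. monomial_exponent n E = top_exponent n}"
  have top_sum: "(\<Sum>i<n. fst (top_exponent n) i) = 2 * n * (n - 1)"
    by (simp add: top_exponent_def)
  have fiber_sum: "(\<Sum>E\<in>?F. state_coeff a n h v E)
      = (if (h, v) \<in> one_turn_states n then lead_weight a n n h v else 0)"
    if s: "(h, v) \<in> dwbc_states n" for h v
  proof -
    have zero: "state_coeff a n h v E = 0"
      if "E \<in> ?F" "(h, v) \<notin> one_turn_states n \<or> E \<noteq> lead_exponents n h" for E
      using top_exponent_fiber[OF s, of E a] that top_sum by auto
    show ?thesis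
    proof (cases "(h, v) \<in> one_turn_states n")
      case True
      have "(\<Sum>E\<in>{lead_exponents n h}. state_coeff a n h v E) = (\<Sum>E\<in>?F. state_coeff a n h v E)"
        using True zero
        by (intro sum.mono_neutral_left) (auto simp: finite_exponent_maps
            lead_exponents_in_exponent_maps monomial_exponent_lead_exponents)
      then show ?thesis using True by (simp add: state_coeff_lead_exponents)
    qed (simp add: zero)
  qed
  have "Ztilde_coeff a n (top_exponent n)
      = (\<Sum>(h, v)\<in>dwbc_states n. if (h, v) \<in> one_turn_states n then lead_weight a n n h v else 0)"
    unfolding Ztilde_coeff_def by (intro sum.cong refl) (auto simp: fiber_sum)
  also have "\<dots> = (\<Sum>(h, v)\<in>one_turn_states n. lead_weight a n n h v)"
    using finite_dwbc_states
    by (intro sum.mono_neutral_cong_right) (auto simp: one_turn_states_def split: if_splits)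
  finally show ?thesis .
qed

section \<open>Summing the leading weights row by row\<close>

text \<open>The bottom \<open>r\<close> rows of a state in \<open>one_turn_states\<close>, where column \<open>j\<close> enters from
  above with an up arrow iff \<open>j \<in> S\<close>.  Removing the top row, which turns at some \<open>p \<in> S\<close>,
  leaves a strip for \<open>S - {p}\<close>.\<close>
definition one_turn_strips ::
    "nat \<Rightarrow> nat \<Rightarrow> nat set \<Rightarrow> ((nat \<Rightarrow> nat \<Rightarrow> bool) \<times> (nat \<Rightarrow> nat \<Rightarrow> bool)) set" where
  "one_turn_strips n r S = {(h, v).
      (\<forall>i j. h i j \<longrightarrow> i < r \<and> j \<le> n) \<and> (\<forall>i j. v i j \<longrightarrow> i \<le> r \<and> j < n) \<and>
      (\<forall>j<n. v 0 j = (j \<in> S)) \<and> (\<forall>j<n. \<not> v r j) \<and>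
      (\<forall>i<r. \<exists>p<n. \<forall>j\<le>n. h i j = (j \<le> p)) \<and>
      (\<forall>i<r. \<forall>j<n. ice (h i j) (h i (Suc j)) (v i j) (v (Suc i) j))}"

definition push_row_h :: "nat \<Rightarrow> (nat \<Rightarrow> nat \<Rightarrow> bool) \<Rightarrow> nat \<Rightarrow> nat \<Rightarrow> bool" where
  "push_row_h p h i = (case i of 0 \<Rightarrow> (\<lambda>j. j \<le> p) | Suc i \<Rightarrow> h i)"

definition push_row_v :: "nat set \<Rightarrow> (nat \<Rightarrow> nat \<Rightarrow> bool) \<Rightarrow> nat \<Rightarrow> nat \<Rightarrow> bool" where
  "push_row_v S v i = (case i of 0 \<Rightarrow> (\<lambda>j. j \<in> S) | Suc i \<Rightarrow> v i)"

definition push_row ::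
    "nat set \<Rightarrow> nat \<times> (nat \<Rightarrow> nat \<Rightarrow> bool) \<times> (nat \<Rightarrow> nat \<Rightarrow> bool)
      \<Rightarrow> (nat \<Rightarrow> nat \<Rightarrow> bool) \<times> (nat \<Rightarrow> nat \<Rightarrow> bool)" where
  "push_row S = (\<lambda>(p, h, v). (push_row_h p h, push_row_v S v))"

lemma one_turn_states_eq_strips: "one_turn_states n = one_turn_strips n n {..<n}"
proof -
  have "h i 0 \<and> \<not> h i n" if "\<forall>i<n. \<exists>p<n. \<forall>j\<le>n. h i j = (j \<le> p)" "i < n"
    for h :: "nat \<Rightarrow> nat \<Rightarrow> bool" and i
    using that by force
  then show ?thesis
    unfolding one_turn_states_def dwbc_states_def one_turn_strips_def by auto
qed

lemma finite_one_turn_strips: "finite (one_turn_strips n r S)"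
  by (rule finite_subset[OF _ finite_edge_configurations[of r n]]) (auto simp: one_turn_strips_def)

lemma one_turn_strips_0: "one_turn_strips n 0 {} = {(\<lambda>_ _. False, \<lambda>_ _. False)}"
  by (auto simp: one_turn_strips_def fun_eq_iff) blast

lemma push_row_h_simps [simp]:
  "push_row_h p h 0 = (\<lambda>j. j \<le> p)" "push_row_h p h (Suc i) = h i"
  by (simp_all add: push_row_h_def)

lemma push_row_v_simps [simp]:
  "push_row_v S v 0 = (\<lambda>j. j \<in> S)" "push_row_v S v (Suc i) = v i"
  by (simp_all add: push_row_v_def)

lemma push_row_in_one_turn_strips:
  assumes S: "S \<subseteq> {..<n}" and p: "p \<in> S" and t: "(h, v) \<in> one_turn_strips n r (S - {p})"
  shows "(push_row_h p h, push_row_v S v) \<in> one_turn_strips n (Suc r) S"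
proof -
  have top_row: "ice (j \<le> p) (Suc j \<le> p) (j \<in> S) (v 0 j)" if "j < n" for j
  proof -
    have "v 0 j = (j \<in> S \<and> j \<noteq> p)" using t that by (auto simp: one_turn_strips_def)
    then show ?thesis using p unfolding ice_iff by (cases "j < p"; cases "j = p") auto
  qed
  have "push_row_h p h i j \<longrightarrow> i < Suc r \<and> j \<le> n" for i j
    using t p S by (cases i) (auto simp: one_turn_strips_def)
  moreover have "push_row_v S v i j \<longrightarrow> i \<le> Suc r \<and> j < n" for i j
    using t S by (cases i) (auto simp: one_turn_strips_def)
  moreover have "\<exists>q<n. \<forall>j\<le>n. push_row_h p h i j = (j \<le> q)" if "i < Suc r" for i
    using t p S that by (cases i) (auto simp: one_turn_strips_def)
  moreover have "ice (push_row_h p h i j) (push_row_h p h i (Suc j))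
                     (push_row_v S v i j) (push_row_v S v (Suc i) j)"
    if "i < Suc r" "j < n" for i j
    using t top_row that by (cases i) (auto simp: one_turn_strips_def)
  ultimately show ?thesis
    using t by (auto simp: one_turn_strips_def)
qed

lemma one_turn_strips_Suc_cases:
  assumes S: "S \<subseteq> {..<n}" and s: "(h, v) \<in> one_turn_strips n (Suc r) S"
  obtains p where "p \<in> S" "(\<lambda>i. h (Suc i), \<lambda>i. v (Suc i)) \<in> one_turn_strips n r (S - {p})"
    "h = push_row_h p (\<lambda>i. h (Suc i))" "v = push_row_v S (\<lambda>i. v (Suc i))"
proof -
  obtain p where pn: "p < n" and hp: "\<forall>j\<le>n. h 0 j = (j \<le> p)"
    using s by (auto simp: one_turn_strips_def)
  have ice: "ice (h 0 j) (h 0 (Suc j)) (v 0 j) (v (Suc 0) j)" if "j < n" for j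
    using s that by (auto simp: one_turn_strips_def)
  have vt: "v 0 j = (j \<in> S)" if "j < n" for j
    using s that by (auto simp: one_turn_strips_def)
  have "p \<in> S"
    using ice[OF pn] hp pn vt[OF pn] by (auto simp: ice_iff)
  have v1: "v (Suc 0) j = (j \<in> S - {p})" if "j < n" for j
    using ice[OF that] hp pn that vt[OF that] by (cases "j = p") (auto simp: ice_iff)
  have "(\<lambda>i. h (Suc i), \<lambda>i. v (Suc i)) \<in> one_turn_strips n r (S - {p})"
    using s v1 by (auto simp: one_turn_strips_def)
  moreover have "h = push_row_h p (\<lambda>i. h (Suc i))"
  proof (intro ext)
    fix i j show "h i j = push_row_h p (\<lambda>i. h (Suc i)) i j"
      using hp pn s by (cases i; cases "j \<le> n") (auto simp: one_turn_strips_def)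
  qed
  moreover have "v = push_row_v S (\<lambda>i. v (Suc i))"
  proof (intro ext)
    fix i j show "v i j = push_row_v S (\<lambda>i. v (Suc i)) i j"
      using vt s S by (cases i; cases "j < n") (auto simp: one_turn_strips_def)
  qed
  ultimately show ?thesis using that \<open>p \<in> S\<close> by blast
qed

lemma one_turn_strips_Suc:
  assumes S: "S \<subseteq> {..<n}"
  shows "one_turn_strips n (Suc r) S
       = push_row S ` (SIGMA p:S. one_turn_strips n r (S - {p}))"
proof
  show "one_turn_strips n (Suc r) S \<subseteq> push_row S ` (SIGMA p:S. one_turn_strips n r (S - {p}))"
  proof
    fix s assume "s \<in> one_turn_strips n (Suc r) S"
    then obtain h v where hv: "s = (h, v)" "(h, v) \<in> one_turn_strips n (Suc r) S"
      by (cases s) auto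
    from one_turn_strips_Suc_cases[OF S hv(2)] obtain p where
      "p \<in> S" "(\<lambda>i. h (Suc i), \<lambda>i. v (Suc i)) \<in> one_turn_strips n r (S - {p})"
      "h = push_row_h p (\<lambda>i. h (Suc i))" "v = push_row_v S (\<lambda>i. v (Suc i))" .
    then show "s \<in> push_row S ` (SIGMA p:S. one_turn_strips n r (S - {p}))"
      unfolding hv(1) push_row_def
      by (intro image_eqI[where x = "(p, \<lambda>i. h (Suc i), \<lambda>i. v (Suc i))"]) auto
  qed
qed (use push_row_in_one_turn_strips[OF S] in \<open>auto simp: push_row_def\<close>)

lemma inj_on_push_row: "inj_on (push_row S) X"
proof (rule inj_onI)
  fix x y assume eq: "push_row S x = push_row S y"
  obtain p h v p' h' v' where xy: "x = (p, h, v)" "y = (p', h', v')"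
    by (cases x, cases y) auto
  have h: "push_row_h p h = push_row_h p' h'" and v: "push_row_v S v = push_row_v S v'"
    using eq unfolding xy push_row_def by simp_all
  have "(\<lambda>j. j \<le> p) = (\<lambda>j. j \<le> p')" "h = h'"
    using fun_cong[OF h, of 0] fun_cong[OF h, of "Suc i" for i] by (auto simp: fun_eq_iff)
  moreover have "v = v'"
    using fun_cong[OF v, of "Suc i" for i] by (auto simp: fun_eq_iff)
  ultimately show "x = y"
    unfolding xy by (metis order_refl le_antisym)
qed

definition rho :: "complex \<Rightarrow> complex" where
  "rho a = - inverse (a\<^sup>2)"

definition holes_below :: "nat set \<Rightarrow> nat \<Rightarrow> nat" where
  "holes_below S p = card {j. j < p \<and> j \<notin> S}"

definition members_above :: "nat set \<Rightarrow> nat \<Rightarrow> nat" where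
  "members_above S p = card {j\<in>S. p < j}"

definition hole_inversions :: "nat set \<Rightarrow> nat" where
  "hole_inversions S = (\<Sum>q\<in>S. holes_below S q)"

definition qfact :: "complex \<Rightarrow> nat \<Rightarrow> complex" where
  "qfact q r = (\<Prod>k<r. \<Sum>t\<le>k. q ^ t)"

lemma vweight_lead_top_row:
  assumes "p \<in> S"
  shows "vweight_lead a (j \<le> p) (Suc j \<le> p) (j \<in> S) (j \<in> S \<and> j \<noteq> p)
       = (if j = p then sig (a\<^sup>2) else a) * (if (j < p \<and> j \<notin> S) \<or> (p < j \<and> j \<in> S) then rho a else 1)"
proof -
  have "a * rho a = - inverse a"
    unfolding rho_def by (cases "a = 0") (auto simp: field_simps power2_eq_square)
  then show ?thesis
    unfolding vweight_lead_def vweight_coeff_def lead_degree_def using assms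
    by (cases "j < p"; cases "j = p"; cases "j \<in> S") auto
qed

lemma prod_top_row:
  assumes S: "S \<subseteq> {..<n}" and p: "p \<in> S"
  shows "(\<Prod>j<n. vweight_lead a (j \<le> p) (Suc j \<le> p) (j \<in> S) (j \<in> S \<and> j \<noteq> p))
       = sig (a\<^sup>2) * a ^ (n - 1) * rho a ^ (holes_below S p + members_above S p)"
proof -
  let ?P = "\<lambda>j. (j < p \<and> j \<notin> S) \<or> (p < j \<and> j \<in> S)"
  have pn: "p < n" using S p by auto
  have "(\<Prod>j<n. if j = p then sig (a\<^sup>2) else a) = sig (a\<^sup>2) * (\<Prod>j\<in>{..<n} - {p}. a)"
    using pn by (simp add: prod.remove)
  also have "\<dots> = sig (a\<^sup>2) * a ^ (n - 1)"
    using pn by simp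
  finally have diag: "(\<Prod>j<n. if j = p then sig (a\<^sup>2) else a) = sig (a\<^sup>2) * a ^ (n - 1)" .
  have "{j\<in>{..<n}. ?P j} = {j. j < p \<and> j \<notin> S} \<union> {j\<in>S. p < j}"
    using S pn by auto
  moreover have "card ({j. j < p \<and> j \<notin> S} \<union> {j\<in>S. p < j}) = holes_below S p + members_above S p"
    unfolding holes_below_def members_above_def
    by (rule card_Un_disjoint) (use S finite_subset[OF _ finite_lessThan[of n]] in auto)
  ultimately have off:
    "(\<Prod>j<n. if ?P j then rho a else 1) = rho a ^ (holes_below S p + members_above S p)"
    by (simp add: prod.inter_filter[symmetric])
  show ?thesis
    by (simp add: vweight_lead_top_row[OF p] prod.distrib diag off)
qed

lemma lead_weight_push_row:
  assumes S: "S \<subseteq> {..<n}" and p: "p \<in> S" and t: "(h, v) \<in> one_turn_strips n r (S - {p})"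
  shows "lead_weight a n (Suc r) (push_row_h p h) (push_row_v S v)
       = sig (a\<^sup>2) * a ^ (n - 1) * rho a ^ (holes_below S p + members_above S p)
           * lead_weight a n r h v"
proof -
  have "v 0 j = (j \<in> S \<and> j \<noteq> p)" if "j < n" for j
    using t that by (auto simp: one_turn_strips_def)
  then have "lead_weight a n (Suc r) (push_row_h p h) (push_row_v S v)
      = (\<Prod>j<n. vweight_lead a (j \<le> p) (Suc j \<le> p) (j \<in> S) (j \<in> S \<and> j \<noteq> p)) * lead_weight a n r h v"
    unfolding lead_weight_def prod.lessThan_Suc_shift by simp
  then show ?thesis by (simp add: prod_top_row[OF S p])
qed

lemma holes_below_remove:
  assumes "p \<in> S"
  shows "holes_below (S - {p}) q = holes_below S q + of_bool (p < q)"
proof -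
  have "{j. j < q \<and> j \<notin> S - {p}} = {j. j < q \<and> j \<notin> S} \<union> {j. j = p \<and> p < q}"
    using assms by auto
  moreover have "card ({j. j < q \<and> j \<notin> S} \<union> {j. j = p \<and> p < q})
      = card {j. j < q \<and> j \<notin> S} + card {j. j = p \<and> p < q}"
    by (rule card_Un_disjoint) (use assms in auto)
  moreover have "card {j. j = p \<and> p < q} = of_bool (p < q)"
    by (cases "p < q") auto
  ultimately show ?thesis unfolding holes_below_def by simp
qed

lemma hole_inversions_remove:
  assumes "finite S" "p \<in> S"
  shows "hole_inversions (S - {p}) + holes_below S p = hole_inversions S + members_above S p"
proof -
  have "hole_inversions S = holes_below S p + (\<Sum>q\<in>S - {p}. holes_below S q)"
    unfolding hole_inversions_def using assms by (simp add: sum.remove)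
  moreover have "hole_inversions (S - {p})
      = (\<Sum>q\<in>S - {p}. holes_below S q) + (\<Sum>q\<in>S - {p}. of_bool (p < q))"
    unfolding hole_inversions_def by (simp add: holes_below_remove[OF assms(2)] sum.distrib)
  moreover have "(\<Sum>q\<in>S - {p}. of_bool (p < q) :: nat) = members_above S p"
    unfolding members_above_def using assms by (auto intro!: arg_cong[where f = card])
  ultimately show ?thesis by simp
qed

lemma power_hole_inversions_remove:
  fixes c :: "'a::monoid_mult"
  assumes "finite S" "p \<in> S"
  shows "c ^ (holes_below S p + members_above S p) * c ^ hole_inversions (S - {p})
       = c ^ hole_inversions S * (c\<^sup>2) ^ members_above S p"
proof -
  have "holes_below S p + members_above S p + hole_inversions (S - {p})
      = hole_inversions S + 2 * members_above S p"
    using hole_inversions_remove[OF assms] by simp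
  then show ?thesis
    by (simp only: power_add[symmetric] power_mult[symmetric] mult.commute)
qed

lemma members_above_bij:
  assumes "finite S"
  shows "bij_betw (members_above S) S {..<card S}"
proof -
  have less: "members_above S q < members_above S p" if "p \<in> S" "q \<in> S" "p < q" for p q
    unfolding members_above_def by (rule psubset_card_mono) (use assms that in auto)
  have "inj_on (members_above S) S"
    by (rule inj_onI) (metis less less_irrefl linorder_neqE_nat)
  moreover have "members_above S ` S \<subseteq> {..<card S}"
    unfolding members_above_def using assms by (auto intro!: psubset_card_mono)
  ultimately show ?thesis
    by (simp add: bij_betw_def card_image card_subset_eq)
qed

lemma sum_lead_weight_one_turn_strips:
  "S \<subseteq> {..<n} \<Longrightarrow> card S = r \<Longrightarrow>
    (\<Sum>(h, v)\<in>one_turn_strips n r S. lead_weight a n r h v)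
      = sig (a\<^sup>2) ^ r * a ^ (r * (n - 1)) * rho a ^ hole_inversions S * qfact ((rho a)\<^sup>2) r"
proof (induction r arbitrary: S)
  case 0
  then have "S = {}" using finite_subset[OF _ finite_lessThan[of n]] by auto
  then show ?case by (simp add: one_turn_strips_0 lead_weight_def hole_inversions_def qfact_def)
next
  case (Suc r)
  have fin: "finite S" using Suc.prems(1) finite_subset by blast
  define q where "q = (rho a)\<^sup>2"
  define C where
    "C = sig (a\<^sup>2) ^ Suc r * a ^ (Suc r * (n - 1)) * rho a ^ hole_inversions S * qfact q r"
  have row: "sig (a\<^sup>2) * a ^ (n - 1) * rho a ^ (holes_below S p + members_above S p)
      * (sig (a\<^sup>2) ^ r * a ^ (r * (n - 1)) * rho a ^ hole_inversions (S - {p}) * qfact q r)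
      = C * q ^ members_above S p" if p: "p \<in> S" for p
  proof -
    have "rho a ^ (holes_below S p + members_above S p) * rho a ^ hole_inversions (S - {p})
        = rho a ^ hole_inversions S * q ^ members_above S p"
      unfolding q_def by (rule power_hole_inversions_remove[OF fin p])
    then show ?thesis
      unfolding C_def by (simp add: power_add mult_ac)
  qed
  have "(\<Sum>(h, v)\<in>one_turn_strips n (Suc r) S. lead_weight a n (Suc r) h v)
      = (\<Sum>(p, h, v)\<in>(SIGMA p:S. one_turn_strips n r (S - {p})).
           lead_weight a n (Suc r) (push_row_h p h) (push_row_v S v))"
    unfolding one_turn_strips_Suc[OF Suc.prems(1)]
    by (subst sum.reindex[OF inj_on_push_row]) (simp add: push_row_def case_prod_unfold)
  also have "\<dots> = (\<Sum>p\<in>S. \<Sum>(h, v)\<in>one_turn_strips n r (S - {p}).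
      lead_weight a n (Suc r) (push_row_h p h) (push_row_v S v))"
    using fin finite_one_turn_strips by (subst sum.Sigma) auto
  also have "\<dots> = (\<Sum>p\<in>S. sig (a\<^sup>2) * a ^ (n - 1) * rho a ^ (holes_below S p + members_above S p)
      * (\<Sum>(h, v)\<in>one_turn_strips n r (S - {p}). lead_weight a n r h v))"
    unfolding sum_distrib_left
    by (intro sum.cong refl) (auto simp: lead_weight_push_row[OF Suc.prems(1)])
  also have "\<dots> = (\<Sum>p\<in>S. C * q ^ members_above S p)"
  proof (intro sum.cong refl)
    fix p assume p: "p \<in> S"
    have sub: "S - {p} \<subseteq> {..<n}" "card (S - {p}) = r" using Suc.prems p fin by auto
    show "sig (a\<^sup>2) * a ^ (n - 1) * rho a ^ (holes_below S p + members_above S p)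
        * (\<Sum>(h, v)\<in>one_turn_strips n r (S - {p}). lead_weight a n r h v) = C * q ^ members_above S p"
      unfolding Suc.IH[OF sub] q_def[symmetric] by (rule row[OF p])
  qed
  also have "\<dots> = C * (\<Sum>k\<le>r. q ^ k)"
    using sum.reindex_bij_betw[OF members_above_bij[OF fin], of "\<lambda>k. q ^ k"] Suc.prems(2)
    by (simp add: sum_distrib_left[symmetric] lessThan_Suc_atMost)
  also have "\<dots>
      = sig (a\<^sup>2) ^ Suc r * a ^ (Suc r * (n - 1)) * rho a ^ hole_inversions S * qfact q (Suc r)"
    by (simp add: C_def qfact_def)
  finally show ?case unfolding q_def .
qed

lemma sig_geometric_sum:
  assumes a: "a \<noteq> 0"
  shows "sig (a\<^sup>2) * a ^ (2 * r) * (\<Sum>t\<le>r. ((rho a)\<^sup>2) ^ t) = sig (a ^ (2 * Suc r))"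
proof (induction r)
  case (Suc r)
  define q where "q = (rho a)\<^sup>2"
  define Q where "Q = (\<Sum>t\<le>r. q ^ t)"
  have q: "q = inverse (a ^ 4)"
    by (simp add: q_def rho_def power2_eq_square field_simps eval_nat_numeral)
  have "(\<Sum>t\<le>Suc r. q ^ t) = 1 + q * Q"
    unfolding Q_def sum.atMost_Suc_shift by (simp add: sum_distrib_left)
  then have "sig (a\<^sup>2) * a ^ (2 * Suc r) * (\<Sum>t\<le>Suc r. q ^ t)
      = sig (a\<^sup>2) * a ^ (2 * Suc r) + a\<^sup>2 * q * (sig (a\<^sup>2) * a ^ (2 * r) * Q)"
    by (simp add: algebra_simps power_add[symmetric])
  also have "\<dots> = sig (a\<^sup>2) * a ^ (2 * Suc r) + a\<^sup>2 * inverse (a ^ 4) * sig (a ^ (2 * Suc r))"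
    using Suc.IH unfolding Q_def q_def[symmetric] q by simp
  also have "\<dots> = sig (a ^ (2 * Suc (Suc r)))"
    unfolding sig_def using a by (simp add: field_simps eval_nat_numeral)
  finally show ?case unfolding q_def .
qed simp

lemma sig_power_qfact:
  assumes "a \<noteq> 0"
  shows "sig (a\<^sup>2) ^ r * a ^ (r * (r - 1)) * qfact ((rho a)\<^sup>2) r = (\<Prod>i=1..r. sig (a ^ (2 * i)))"
proof (induction r)
  case (Suc r)
  have "Suc r * (Suc r - 1) = r * (r - 1) + 2 * r" by (cases r) auto
  then have "a ^ (Suc r * (Suc r - 1)) = a ^ (r * (r - 1)) * a ^ (2 * r)"
    by (simp only: power_add)
  then have "sig (a\<^sup>2) ^ Suc r * a ^ (Suc r * (Suc r - 1)) * qfact ((rho a)\<^sup>2) (Suc r)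
      = (sig (a\<^sup>2) ^ r * a ^ (r * (r - 1)) * qfact ((rho a)\<^sup>2) r)
        * (sig (a\<^sup>2) * a ^ (2 * r) * (\<Sum>t\<le>r. ((rho a)\<^sup>2) ^ t))"
    unfolding qfact_def by (simp add: mult_ac)
  also have "\<dots> = (\<Prod>i=1..Suc r. sig (a ^ (2 * i)))"
    unfolding Suc.IH sig_geometric_sum[OF assms] by (simp add: prod.nat_ivl_Suc')
  finally show ?case .
qed (simp add: qfact_def)

lemma sum_lead_weight_one_turn_states:
  assumes "a \<noteq> 0"
  shows "(\<Sum>(h, v)\<in>one_turn_states n. lead_weight a n n h v) = Cn n a"
proof -
  have "hole_inversions {..<n} = 0"
    by (simp add: hole_inversions_def holes_below_def)
  then show ?thesis
    using sum_lead_weight_one_turn_strips[of "{..<n}" n n a] sig_power_qfact[OF assms, of n]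
    by (simp add: one_turn_states_eq_strips Cn_def power_mult_distrib mult.commute)
qed

theorem lemma4:
  fixes n :: nat and a :: complex
  assumes "n \<ge> 1" and "a \<noteq> 0"
  shows "\<exists>c :: ((nat \<Rightarrow> nat) \<times> (nat \<Rightarrow> nat)) \<Rightarrow> complex.
           finite {m. c m \<noteq> 0} \<and>
           (\<forall>m. c m \<noteq> 0 \<longrightarrow> (\<forall>i\<ge>n. fst m i = 0 \<and> snd m i = 0)) \<and>
           (\<forall>x y. (\<forall>i<n. x i \<noteq> 0 \<and> y i \<noteq> 0) \<longrightarrow>
              Ztilde n a x y = (\<Sum>m\<in>{m. c m \<noteq> 0}. c m * (\<Prod>i<n. x i ^ fst m i * y i ^ snd m i))) \<and>
           c (\<lambda>i. if i < n then 2 * (n - 1) else 0, \<lambda>_. 0) = Cn n a \<and>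
           (\<forall>m. c m \<noteq> 0 \<longrightarrow> m \<noteq> (\<lambda>i. if i < n then 2 * (n - 1) else 0, \<lambda>_. 0) \<longrightarrow>
              (\<Sum>i<n. fst m i) < 2 * n * (n - 1))"
proof (intro exI[of _ "Ztilde_coeff a n"] conjI allI impI)
  show "finite {m. Ztilde_coeff a n m \<noteq> 0}"
    by (rule finite_Ztilde_coeff_support)
next
  fix m i assume "Ztilde_coeff a n m \<noteq> 0" "n \<le> i"
  then show "fst m i = 0" "snd m i = 0"
    by (auto elim!: Ztilde_coeff_nonzero simp: monomial_exponent_def)
next
  fix x y :: "nat \<Rightarrow> complex" assume "\<forall>i<n. x i \<noteq> 0 \<and> y i \<noteq> 0"
  then show "Ztilde n a x y = (\<Sum>m\<in>{m. Ztilde_coeff a n m \<noteq> 0}.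
      Ztilde_coeff a n m * (\<Prod>i<n. x i ^ fst m i * y i ^ snd m i))"
    unfolding monomial_def[symmetric] by (rule Ztilde_expansion)
next
  show "Ztilde_coeff a n (\<lambda>i. if i < n then 2 * (n - 1) else 0, \<lambda>_. 0) = Cn n a"
    using Ztilde_coeff_top_exponent sum_lead_weight_one_turn_states[OF \<open>a \<noteq> 0\<close>]
    by (simp add: top_exponent_def)
next
  fix m assume "Ztilde_coeff a n m \<noteq> 0" "m \<noteq> (\<lambda>i. if i < n then 2 * (n - 1) else 0, \<lambda>_. 0)"
  then show "(\<Sum>i<n. fst m i) < 2 * n * (n - 1)"
    using Ztilde_coeff_degree by (simp add: top_exponent_def)
qed

end
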